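(* Let $A$ be an $n\times n$ matrix with non-negative real entries and $\|A\|_{\max} \le 1$, and let $\lambda_{\max}$ be its Perron eigenvalue (spectral radius). Define \[ \gamma := n\lambda_{\max} - \sum_{i,j=1}^n \min\{A_{ij},A_{ji}\} + \sum_{i,j=1}^n\left(1 + \min\{A_{ij},A_{ji}\} - A_{ij}^2 - A_{ji}^2\right). \] Then $\gamma \ge 0$, and any eigenvalue $\mu$ of $A$ with $\mathrm{Im}(\mu) \ne 0$ satisfies \[ |\mu|^2 \le \min\left\{ \frac{n^2 + n\lambda_{\max} - 2\lambda_{\max}^2 - \gamma}{4},\ \lambda_{\max}^2 \right\} \] and \[ \mathrm{Re}(\mu)^2 \le \min\left\{ \frac{n^2 + 3n\lambda_{\max} - 4\lambda_{\max}^2 - \gamma}{8},\ \lambda_{\max}^2 \right\}. \]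
   Context: $\|A\|_{\max}$ denotes the largest absolute value of an entry of $A$. The Perron eigenvalue of a non-negative matrix is its spectral radius, which is an eigenvalue by Perron–Frobenius theory. *)

theory Defs
  imports Complex_Main "Jordan_Normal_Form.Spectral_Radius"
begin

definition lam_max :: "real mat \<Rightarrow> real" where
  "lam_max A = spectral_radius (map_mat complex_of_real A)"

definition gamma_val :: "nat \<Rightarrow> real mat \<Rightarrow> real" where
  "gamma_val n A = real n * lam_max A
     - (\<Sum>i<n. \<Sum>j<n. min (A $$ (i,j)) (A $$ (j,i)))
     + (\<Sum>i<n. \<Sum>j<n. 1 + min (A $$ (i,j)) (A $$ (j,i)) - (A $$ (i,j))^2 - (A $$ (j,i))^2)"

end

theory Submission
  imports Defs
begin

(* By Perron-Frobenius, r = lam_max A is itself an eigenvalue of A, so for a non-real eigenvalue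
   \<mu> the numbers r, \<mu>, cnj \<mu> are three distinct eigenvalues.  Orthonormalising eigenvectors
   for them gives vectors e1, e2, e3 on which A is upper triangular with diagonal r, \<mu>, cnj \<mu>,
   and Bessel's inequality turns this into Schur's bound r^2 + 2|\<mu>|^2 \<le> ||A||_F^2.  In the same
   basis the Hermitian part (A + A^T)/2 has diagonal r, Re \<mu>, Re \<mu>, whence
   r^2 + 2 Re(\<mu>)^2 \<le> ||(A + A^T)/2||_F^2 = (||A||_F^2 + tr(A^2))/2.
   Since gamma = n r + n^2 - 2 ||A||_F^2, everything then follows from a^2 + b^2 \<le> 1 + a b on
   [0,1] and from tr(A^2) = \<Sum> a_ij a_ji \<le> n r: the symmetric matrix (a_ij a_ji) lies entrywise
   below A, so the entry sums of its powers grow no faster than r^k, whereas by Cauchy-Schwarz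
   they grow at least like (tr(A^2)/n)^k. *)

section \<open>Matrices as functions\<close>

(* Vectors are functions nat \<Rightarrow> 'a and n \<times> n matrices are functions nat \<Rightarrow> nat \<Rightarrow> 'a;
   only arguments below n matter. *)
definition matvec :: "nat \<Rightarrow> (nat \<Rightarrow> nat \<Rightarrow> 'a::comm_ring_1) \<Rightarrow> (nat \<Rightarrow> 'a) \<Rightarrow> nat \<Rightarrow> 'a" where
  "matvec n M y = (\<lambda>i. \<Sum>j<n. M i j * y j)"

lemma matvec_cong: "(\<And>j. j < n \<Longrightarrow> f j = g j) \<Longrightarrow> matvec n M f = matvec n M g"
  unfolding matvec_def by (auto intro!: sum.cong)

lemma matvec_power_cong:
  assumes "\<And>j. j < n \<Longrightarrow> f j = g j" and "i < n"
  shows "(matvec n M ^^ k) f i = (matvec n M ^^ k) g i"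
proof (cases k)
  case 0
  then show ?thesis using assms by simp
next
  case (Suc k')
  then show ?thesis using matvec_cong[OF assms(1)] by (simp only: funpow_Suc_right o_def)
qed

lemma matvec_lin: "matvec n M (\<lambda>j. c * f j + d * g j) = (\<lambda>i. c * matvec n M f i + d * matvec n M g i)"
  unfolding matvec_def by (auto simp: algebra_simps sum.distrib sum_distrib_left)

lemma matvec_power_lin:
  "(matvec n M ^^ k) (\<lambda>j. c * f j + d * g j) = (\<lambda>i. c * (matvec n M ^^ k) f i + d * (matvec n M ^^ k) g i)"
proof (induction k arbitrary: f g)
  case (Suc k)
  then show ?case by (simp only: funpow_Suc_right o_def matvec_lin)
qed simp

lemma matvec_smult: "matvec n M (\<lambda>j. c * y j) i = c * matvec n M y i"
  unfolding matvec_def by (simp add: sum_distrib_left mult_ac)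

lemma matvec_power_smult: "(matvec n M ^^ k) (\<lambda>j. c * y j) i = c * (matvec n M ^^ k) y i"
  using matvec_power_lin[where k = k and c = c and f = y and d = 0 and g = y] by simp

lemma matvec_mono:
  fixes M :: "nat \<Rightarrow> nat \<Rightarrow> real"
  assumes "\<And>i j. i < n \<Longrightarrow> j < n \<Longrightarrow> 0 \<le> M i j" and "\<And>j. j < n \<Longrightarrow> f j \<le> g j"
    and "i < n"
  shows "matvec n M f i \<le> matvec n M g i"
  unfolding matvec_def using assms by (intro sum_mono mult_left_mono) auto

lemma matvec_power_mono:
  fixes M :: "nat \<Rightarrow> nat \<Rightarrow> real"
  assumes M: "\<And>i j. i < n \<Longrightarrow> j < n \<Longrightarrow> 0 \<le> M i j"
    and "\<And>j. j < n \<Longrightarrow> f j \<le> g j" and "i < n"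
  shows "(matvec n M ^^ k) f i \<le> (matvec n M ^^ k) g i"
  using assms(2,3)
proof (induction k arbitrary: f g i)
  case (Suc k)
  have "(matvec n M ^^ k) (matvec n M f) i \<le> (matvec n M ^^ k) (matvec n M g) i"
    by (rule Suc.IH) (auto intro!: matvec_mono M Suc.prems)
  then show ?case by (simp only: funpow_Suc_right o_def)
qed simp

lemma matvec_power_mono_matrix:
  fixes L M :: "nat \<Rightarrow> nat \<Rightarrow> real"
  assumes L: "\<And>i j. i < n \<Longrightarrow> j < n \<Longrightarrow> 0 \<le> L i j"
    and LM: "\<And>i j. i < n \<Longrightarrow> j < n \<Longrightarrow> L i j \<le> M i j"
    and "\<And>j. j < n \<Longrightarrow> 0 \<le> f j" and "i < n"
  shows "(matvec n L ^^ k) f i \<le> (matvec n M ^^ k) f i"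
  using assms(3,4)
proof (induction k arbitrary: f i)
  case (Suc k)
  have M: "0 \<le> M i j" if "i < n" "j < n" for i j using L LM that by (meson order_trans)
  have "matvec n L f j \<le> matvec n M f j" if "j < n" for j
    unfolding matvec_def using LM Suc.prems(1) that by (intro sum_mono mult_right_mono) auto
  then have "(matvec n L ^^ k) (matvec n L f) i \<le> (matvec n L ^^ k) (matvec n M f) i"
    using Suc.prems(2) by (intro matvec_power_mono L)
  also have "\<dots> \<le> (matvec n M ^^ k) (matvec n M f) i"
    by (rule Suc.IH[OF _ Suc.prems(2)])
       (use M Suc.prems(1) in \<open>auto simp: matvec_def intro!: sum_nonneg\<close>)
  finally show ?case by (simp only: funpow_Suc_right o_def)
qed simp

lemma matvec_map_mat:
  assumes "A \<in> carrier_mat n n" and "i < n"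
  shows "matvec n (\<lambda>i j. map_mat f A $$ (i,j)) y i = matvec n (\<lambda>i j. f (A $$ (i,j))) y i"
  using assms unfolding matvec_def by (auto intro!: sum.cong)

lemma mult_mat_vec_eq_matvec:
  assumes "P \<in> carrier_mat n n" and "i < n"
  shows "(P *\<^sub>v vec n y) $ i = matvec n (\<lambda>i j. P $$ (i,j)) y i"
  using assms unfolding matvec_def by (simp add: scalar_prod_def atLeast0LessThan row_def)

lemma eigenvalue_iff_matvec:
  fixes M :: "'a::field mat"
  assumes M: "M \<in> carrier_mat n n"
  shows "eigenvalue M \<nu> \<longleftrightarrow>
    (\<exists>v. (\<exists>i<n. v i \<noteq> 0) \<and> (\<forall>i<n. matvec n (\<lambda>i j. M $$ (i,j)) v i = \<nu> * v i))"
proof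
  assume "eigenvalue M \<nu>"
  then obtain v where v: "v \<in> carrier_vec n" "v \<noteq> 0\<^sub>v n" "M *\<^sub>v v = \<nu> \<cdot>\<^sub>v v"
    using M unfolding eigenvalue_def eigenvector_def by auto
  have "\<exists>i<n. v $ i \<noteq> 0"
    using v(1,2) by (metis carrier_vecD eq_vecI index_zero_vec)
  moreover have "vec n (($) v) = v" using v(1) by auto
  then have "matvec n (\<lambda>i j. M $$ (i,j)) (($) v) i = \<nu> * v $ i" if "i < n" for i
    using mult_mat_vec_eq_matvec[OF M that, of "($) v"] v(1,3) that by auto
  ultimately show "\<exists>v. (\<exists>i<n. v i \<noteq> 0) \<and> (\<forall>i<n. matvec n (\<lambda>i j. M $$ (i,j)) v i = \<nu> * v i)"
    by blast
next
  assume "\<exists>v. (\<exists>i<n. v i \<noteq> 0) \<and> (\<forall>i<n. matvec n (\<lambda>i j. M $$ (i,j)) v i = \<nu> * v i)"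
  then obtain v i0 where i0: "i0 < n" "v i0 \<noteq> 0"
    and v: "\<And>i. i < n \<Longrightarrow> matvec n (\<lambda>i j. M $$ (i,j)) v i = \<nu> * v i" by blast
  have "vec n v \<noteq> 0\<^sub>v n" using i0 by (metis index_vec index_zero_vec(1))
  moreover have "M *\<^sub>v vec n v = \<nu> \<cdot>\<^sub>v vec n v"
    using M v mult_mat_vec_eq_matvec[OF M] by (intro eq_vecI) auto
  ultimately show "eigenvalue M \<nu>"
    using M unfolding eigenvalue_def eigenvector_def by (intro exI[of _ "vec n v"]) auto
qed

lemma real_eigenvector_imp_eigenvalue:
  fixes A :: "real mat"
  assumes A: "A \<in> carrier_mat n n" and "i0 < n" "w i0 \<noteq> 0"
    and w: "\<And>i. i < n \<Longrightarrow> matvec n (\<lambda>i j. A $$ (i,j)) w i = c * w i"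
  shows "eigenvalue (map_mat complex_of_real A) (complex_of_real c)"
proof -
  have "matvec n (\<lambda>i j. complex_of_real (A $$ (i,j))) (\<lambda>i. complex_of_real (w i)) i
      = complex_of_real c * complex_of_real (w i)" if "i < n" for i
    using w[OF that] unfolding matvec_def by (simp flip: of_real_mult of_real_sum)
  then show ?thesis
    using A assms(2,3) eigenvalue_iff_matvec[of "map_mat complex_of_real A" n]
    by (auto simp: matvec_map_mat intro!: exI[of _ "\<lambda>i. complex_of_real (w i)"])
qed

lemma eigenvalue_of_real_mat_cnj:
  fixes A :: "real mat"
  assumes A: "A \<in> carrier_mat n n" and "eigenvalue (map_mat complex_of_real A) \<mu>"
  shows "eigenvalue (map_mat complex_of_real A) (cnj \<mu>)"
proof -
  obtain v i0 where "i0 < n" "v i0 \<noteq> 0"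
    and v: "\<And>i. i < n \<Longrightarrow> matvec n (\<lambda>i j. complex_of_real (A $$ (i,j))) v i = \<mu> * v i"
    using assms eigenvalue_iff_matvec[of "map_mat complex_of_real A" n]
    by (auto simp: matvec_map_mat)
  moreover have "matvec n (\<lambda>i j. complex_of_real (A $$ (i,j))) (\<lambda>i. cnj (v i)) i = cnj \<mu> * cnj (v i)"
    if "i < n" for i
    using arg_cong[OF v[OF that], of cnj] unfolding matvec_def by simp
  ultimately show ?thesis
    using A eigenvalue_iff_matvec[of "map_mat complex_of_real A" n]
    by (auto simp: matvec_map_mat intro!: exI[of _ "\<lambda>i. cnj (v i)"])
qed

section \<open>Spectral radius and growth of powers\<close>

lemma eigenvalue_norm_le_lam_max:
  assumes "A \<in> carrier_mat n n" and "eigenvalue (map_mat complex_of_real A) \<mu>"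
  shows "cmod \<mu> \<le> lam_max A"
  unfolding lam_max_def
  using assms eigenvalue_imp_nonzero_dim[of "map_mat complex_of_real A" n]
  by (intro spectral_radius_mem_max(2)[of _ n]) (auto simp: spectrum_def)

lemma lam_max_attained:
  assumes "A \<in> carrier_mat n n" and "n > 0"
  obtains \<mu> where "eigenvalue (map_mat complex_of_real A) \<mu>" and "cmod \<mu> = lam_max A"
  using spectral_radius_mem_max(1)[of "map_mat complex_of_real A" n] assms
  unfolding lam_max_def spectrum_def by auto

lemma lam_max_nonneg:
  assumes "A \<in> carrier_mat n n" and "n > 0"
  shows "lam_max A \<ge> 0"
  using lam_max_attained[OF assms] norm_ge_zero by metis

lemma eigenvalue_smult_mat:
  assumes "M \<in> carrier_mat n n" and "eigenvalue M \<mu>"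
  shows "eigenvalue (c \<cdot>\<^sub>m M) (c * \<mu>)"
proof -
  obtain v where v: "v \<in> carrier_vec n" "v \<noteq> 0\<^sub>v n" "M *\<^sub>v v = \<mu> \<cdot>\<^sub>v v"
    using assms unfolding eigenvalue_def eigenvector_def by auto
  have "(c \<cdot>\<^sub>m M) *\<^sub>v v = c \<cdot>\<^sub>v (M *\<^sub>v v)"
    using v(1) assms(1) by (intro eq_vecI) auto
  then have "(c \<cdot>\<^sub>m M) *\<^sub>v v = (c * \<mu>) \<cdot>\<^sub>v v"
    using v(3) by (simp add: smult_smult_assoc)
  then show ?thesis
    using v assms(1) unfolding eigenvalue_def eigenvector_def by auto
qed

lemma smult_pow_mat:
  fixes B :: "'a::comm_ring_1 mat"
  assumes "B \<in> carrier_mat n n"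
  shows "(c \<cdot>\<^sub>m B) ^\<^sub>m k = (c ^ k) \<cdot>\<^sub>m (B ^\<^sub>m k)"
proof (induction k)
  case (Suc k)
  have Bk: "B ^\<^sub>m k \<in> carrier_mat n n" using assms by simp
  have "(c ^ k \<cdot>\<^sub>m B ^\<^sub>m k) * (c \<cdot>\<^sub>m B) = c ^ k \<cdot>\<^sub>m (B ^\<^sub>m k * (c \<cdot>\<^sub>m B))"
    using mult_smult_assoc_mat[OF Bk, of "c \<cdot>\<^sub>m B" n] assms by simp
  also have "\<dots> = c ^ k \<cdot>\<^sub>m (c \<cdot>\<^sub>m (B ^\<^sub>m k * B))"
    by (simp add: mult_smult_distrib[OF Bk assms])
  also have "\<dots> = c ^ Suc k \<cdot>\<^sub>m (B ^\<^sub>m k * B)"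
    by (rule eq_matI) auto
  finally show ?case using Suc by simp
qed (use assms in auto)

lemma matvec_power_eq_mat_power:
  fixes A :: "real mat"
  assumes A: "A \<in> carrier_mat n n" and "i < n"
  shows "complex_of_real ((matvec n (\<lambda>i j. A $$ (i,j)) ^^ k) y i)
     = (\<Sum>j<n. (map_mat complex_of_real A ^\<^sub>m k) $$ (i,j) * complex_of_real (y j))"
  using assms(2)
proof (induction k arbitrary: y i)
  case 0
  have "(\<Sum>j<n. (1\<^sub>m n :: complex mat) $$ (i,j) * complex_of_real (y j))
      = (\<Sum>j<n. if j = i then complex_of_real (y j) else 0)"
    using 0 by (intro sum.cong) auto
  then show ?case using 0 A by simp
next
  case (Suc k)
  let ?Ac = "map_mat complex_of_real A"
  let ?P = "?Ac ^\<^sub>m k"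
  have "complex_of_real ((matvec n (\<lambda>i j. A $$ (i,j)) ^^ Suc k) y i)
     = (\<Sum>j<n. ?P $$ (i,j) * complex_of_real (matvec n (\<lambda>i j. A $$ (i,j)) y j))"
    using Suc by (simp only: funpow_Suc_right o_def)
  also have "\<dots> = (\<Sum>j<n. \<Sum>l<n. ?P $$ (i,j) * ?Ac $$ (j,l) * complex_of_real (y l))"
    unfolding matvec_def using A by (auto simp: sum_distrib_left mult.assoc intro!: sum.cong)
  also have "\<dots> = (\<Sum>l<n. (\<Sum>j<n. ?P $$ (i,j) * ?Ac $$ (j,l)) * complex_of_real (y l))"
    by (subst sum.swap) (simp add: sum_distrib_right)
  also have "\<dots> = (\<Sum>l<n. (?Ac ^\<^sub>m Suc k) $$ (i,l) * complex_of_real (y l))"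
    using Suc.prems A by (intro sum.cong) (auto simp: scalar_prod_def atLeast0LessThan)
  finally show ?case .
qed

lemma spectral_radius_scaled_less_1:
  fixes A :: "real mat"
  assumes A: "A \<in> carrier_mat n n" and n: "n > 0" and s: "s > lam_max A"
  shows "spectral_radius (complex_of_real (1 / s) \<cdot>\<^sub>m map_mat complex_of_real A) < 1"
proof -
  let ?Ac = "map_mat complex_of_real A"
  let ?B = "complex_of_real (1 / s) \<cdot>\<^sub>m ?Ac"
  have s0: "s > 0" using lam_max_nonneg[OF A n] s by simp
  have B: "?B \<in> carrier_mat n n" using A by simp
  have AcB: "?Ac = complex_of_real s \<cdot>\<^sub>m ?B" using s0 A by (auto intro!: eq_matI)
  obtain \<beta> where \<beta>: "\<beta> \<in> spectrum ?B" "cmod \<beta> = spectral_radius ?B"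
    using spectral_radius_mem_max(1)[OF B n] by auto
  have "eigenvalue (complex_of_real s \<cdot>\<^sub>m ?B) (complex_of_real s * \<beta>)"
    using \<beta>(1) unfolding spectrum_def mem_Collect_eq by (rule eigenvalue_smult_mat[OF B])
  then have "eigenvalue ?Ac (complex_of_real s * \<beta>)" unfolding AcB[symmetric] .
  then have "s * cmod \<beta> \<le> lam_max A"
    using eigenvalue_norm_le_lam_max[OF A] s0 by (fastforce simp: norm_mult)
  then have "s * cmod \<beta> < s * 1" using s by simp
  then show ?thesis using \<beta> s0 by simp
qed

lemma matvec_power_growth_bound:
  fixes A :: "real mat"
  assumes A: "A \<in> carrier_mat n n" and n: "n > 0" and s: "s > lam_max A"
  obtains C where "\<And>k y i. i < n \<Longrightarrow>
    \<bar>(matvec n (\<lambda>i j. A $$ (i,j)) ^^ k) y i\<bar> \<le> C * s ^ k * (\<Sum>j<n. \<bar>y j\<bar>)"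
proof -
  let ?Ac = "map_mat complex_of_real A"
  define B where "B = complex_of_real (1 / s) \<cdot>\<^sub>m ?Ac"
  have s0: "s > 0" using lam_max_nonneg[OF A n] s by simp
  have B: "B \<in> carrier_mat n n" unfolding B_def using A by simp
  have AcB: "?Ac = complex_of_real s \<cdot>\<^sub>m B" unfolding B_def using s0 A by (auto intro!: eq_matI)
  obtain c where c: "\<And>k. norm_bound (B ^\<^sub>m k) c"
    using spectral_radius_jnf_norm_bound_less_1_upper_triangular[OF B]
      spectral_radius_scaled_less_1[OF A n s] unfolding B_def by auto
  have entry: "cmod ((?Ac ^\<^sub>m k) $$ (i,j)) \<le> s ^ k * c" if "i < n" "j < n" for i j k
  proof -
    have "cmod ((?Ac ^\<^sub>m k) $$ (i,j)) = s ^ k * cmod ((B ^\<^sub>m k) $$ (i,j))"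
      unfolding AcB smult_pow_mat[OF B] using that B s0 by (simp add: norm_mult norm_power)
    also have "\<dots> \<le> s ^ k * c"
      using c[of k] that B s0 unfolding norm_bound_def by (intro mult_left_mono) auto
    finally show ?thesis .
  qed
  have "\<bar>(matvec n (\<lambda>i j. A $$ (i,j)) ^^ k) y i\<bar> \<le> c * s ^ k * (\<Sum>j<n. \<bar>y j\<bar>)"
    if i: "i < n" for k y i
  proof -
    have "\<bar>(matvec n (\<lambda>i j. A $$ (i,j)) ^^ k) y i\<bar>
        = cmod (\<Sum>j<n. (?Ac ^\<^sub>m k) $$ (i,j) * complex_of_real (y j))"
      by (metis matvec_power_eq_mat_power[OF A i] norm_of_real)
    also have "\<dots> \<le> (\<Sum>j<n. s ^ k * c * \<bar>y j\<bar>)"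
      using entry i by (intro sum_norm_le) (simp add: norm_mult mult_right_mono)
    also have "\<dots> = c * s ^ k * (\<Sum>j<n. \<bar>y j\<bar>)" by (simp add: sum_distrib_left mult_ac)
    finally show ?thesis .
  qed
  then show ?thesis using that by blast
qed

section \<open>Perron-Frobenius\<close>

definition shift_mat :: "'a \<Rightarrow> (nat \<Rightarrow> nat \<Rightarrow> 'a) \<Rightarrow> nat \<Rightarrow> nat \<Rightarrow> 'a::comm_ring_1" where
  "shift_mat t M i j = (if i = j then t else 0) - M i j"

lemma matvec_shift_mat:
  assumes "i < n"
  shows "matvec n (shift_mat t M) y i = t * y i - matvec n M y i"
proof -
  have "matvec n (shift_mat t M) y i = (\<Sum>j<n. (if i = j then t * y j else 0) - M i j * y j)"
    unfolding matvec_def shift_mat_def by (intro sum.cong) (auto simp: algebra_simps)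
  also have "\<dots> = t * y i - matvec n M y i"
    unfolding matvec_def sum_subtractf using assms by simp
  finally show ?thesis .
qed

lemma matvec_mat: "i < n \<Longrightarrow> matvec n (\<lambda>i j. mat n n (\<lambda>(i,j). M i j) $$ (i,j)) y i = matvec n M y i"
  unfolding matvec_def by (auto intro!: sum.cong)

lemma det_mat_nonzero_if_kernel_trivial:
  fixes M :: "nat \<Rightarrow> nat \<Rightarrow> 'a::field"
  assumes ker: "\<forall>y. (\<forall>i<n. matvec n M y i = 0) \<longrightarrow> (\<forall>i<n. y i = 0)"
  shows "det (mat n n (\<lambda>(i,j). M i j)) \<noteq> 0"
proof
  let ?P = "mat n n (\<lambda>(i,j). M i j)"
  have P: "?P \<in> carrier_mat n n" by simp
  assume "det ?P = 0"
  then obtain v where v: "v \<in> carrier_vec n" "v \<noteq> 0\<^sub>v n" "?P *\<^sub>v v = 0\<^sub>v n"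
    using det_0_iff_vec_prod_zero_field[OF P] by auto
  have "vec n (($) v) = v" using v(1) by auto
  then have "matvec n M (($) v) i = 0" if "i < n" for i
    using v(3) mult_mat_vec_eq_matvec[OF P that, of "($) v"] matvec_mat[where M = M, OF that] that
    by simp
  then have "v $ i = 0" if "i < n" for i using ker that by blast
  then have "v = 0\<^sub>v n" using v(1) by (intro eq_vecI) auto
  with v(2) show False by simp
qed

lemma matvec_inverse_exists:
  fixes M :: "nat \<Rightarrow> nat \<Rightarrow> 'a::field"
  assumes ker: "\<forall>y. (\<forall>i<n. matvec n M y i = 0) \<longrightarrow> (\<forall>i<n. y i = 0)"
  shows "\<exists>N. (\<forall>y. \<forall>i<n. matvec n N (matvec n M y) i = y i)
    \<and> (\<forall>y. \<forall>i<n. matvec n M (matvec n N y) i = y i)"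
proof -
  define P where "P = mat n n (\<lambda>(i,j). M i j)"
  have P: "P \<in> carrier_mat n n" unfolding P_def by simp
  obtain Q where Q: "Q \<in> carrier_mat n n" "Q * P = 1\<^sub>m n" "P * Q = 1\<^sub>m n"
    using det_non_zero_imp_unit[OF P det_mat_nonzero_if_kernel_trivial[OF ker, folded P_def], of "()"]
    unfolding Units_def ring_mat_def by auto
  have P_vec: "P *\<^sub>v vec n y = vec n (matvec n M y)" for y
    using mult_mat_vec_eq_matvec[OF P] matvec_mat[where M = M] P unfolding P_def by (intro eq_vecI) auto
  have Q_vec: "Q *\<^sub>v vec n y = vec n (matvec n (\<lambda>i j. Q $$ (i,j)) y)" for y
    using mult_mat_vec_eq_matvec[OF Q(1)] Q(1) by (intro eq_vecI) auto
  have "vec n y = (Q * P) *\<^sub>v vec n y" for y using Q(2) by simp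
  also have "(Q * P) *\<^sub>v vec n y = vec n (matvec n (\<lambda>i j. Q $$ (i,j)) (matvec n M y))" for y
    using Q(1) P by (simp add: P_vec Q_vec)
  finally have left: "vec n y = vec n (matvec n (\<lambda>i j. Q $$ (i,j)) (matvec n M y))" for y .
  have "vec n y = (P * Q) *\<^sub>v vec n y" for y using Q(3) by simp
  also have "(P * Q) *\<^sub>v vec n y = vec n (matvec n M (matvec n (\<lambda>i j. Q $$ (i,j)) y))" for y
    using Q(1) P by (simp add: P_vec Q_vec)
  finally have right: "vec n y = vec n (matvec n M (matvec n (\<lambda>i j. Q $$ (i,j)) y))" for y .
  show ?thesis
  proof (intro exI[of _ "\<lambda>i j. Q $$ (i,j)"] conjI allI impI)
    fix y i assume "i < n"
    then show "matvec n (\<lambda>i j. Q $$ (i,j)) (matvec n M y) i = y i"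
      using arg_cong[OF left[of y], of "\<lambda>v. v $ i"] by simp
    show "matvec n M (matvec n (\<lambda>i j. Q $$ (i,j)) y) i = y i"
      using \<open>i < n\<close> arg_cong[OF right[of y], of "\<lambda>v. v $ i"] by simp
  qed
qed

lemma subinvariant_vector_exists:
  fixes A :: "real mat"
  assumes A: "A \<in> carrier_mat n n" and n: "n > 0"
    and nonneg: "\<And>i j. i < n \<Longrightarrow> j < n \<Longrightarrow> 0 \<le> A $$ (i,j)"
  obtains x i1 where "\<And>j. j < n \<Longrightarrow> 0 \<le> x j" and "i1 < n" "x i1 \<noteq> 0"
    and "\<And>i. i < n \<Longrightarrow> lam_max A * x i \<le> matvec n (\<lambda>i j. A $$ (i,j)) x i"
proof -
  let ?Ac = "map_mat complex_of_real A"
  obtain \<mu> where \<mu>: "eigenvalue ?Ac \<mu>" "cmod \<mu> = lam_max A"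
    using lam_max_attained[OF A n] .
  then obtain v i1 where v: "i1 < n" "v i1 \<noteq> 0"
    "\<And>i. i < n \<Longrightarrow> matvec n (\<lambda>i j. complex_of_real (A $$ (i,j))) v i = \<mu> * v i"
    using A eigenvalue_iff_matvec[of ?Ac n] by (auto simp: matvec_map_mat)
  have "lam_max A * cmod (v i) \<le> matvec n (\<lambda>i j. A $$ (i,j)) (\<lambda>j. cmod (v j)) i"
    if i: "i < n" for i
  proof -
    have "lam_max A * cmod (v i) = cmod (\<Sum>j<n. complex_of_real (A $$ (i,j)) * v j)"
      using v(3)[OF i] \<mu>(2) unfolding matvec_def by (simp add: norm_mult)
    also have "\<dots> \<le> (\<Sum>j<n. cmod (complex_of_real (A $$ (i,j)) * v j))"
      by (rule norm_sum)
    also have "\<dots> = matvec n (\<lambda>i j. A $$ (i,j)) (\<lambda>j. cmod (v j)) i"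
      unfolding matvec_def using nonneg i by (auto simp: norm_mult intro!: sum.cong)
    finally show ?thesis .
  qed
  then show ?thesis using that[of "\<lambda>j. cmod (v j)" i1] v(1,2) by auto
qed

lemma matvec_power_subinvariant:
  fixes M :: "nat \<Rightarrow> nat \<Rightarrow> real"
  assumes M: "\<And>i j. i < n \<Longrightarrow> j < n \<Longrightarrow> 0 \<le> M i j" and r: "0 \<le> r"
    and sub: "\<And>i. i < n \<Longrightarrow> r * x i \<le> matvec n M x i" and "i < n"
  shows "r ^ k * x i \<le> (matvec n M ^^ k) x i"
  using assms(4)
proof (induction k arbitrary: i)
  case (Suc k)
  have "r ^ Suc k * x i = r * (r ^ k * x i)" by simp
  also have "\<dots> \<le> r * (matvec n M ^^ k) x i" using Suc r by (intro mult_left_mono) auto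
  also have "\<dots> = (matvec n M ^^ k) (\<lambda>j. r * x j) i" by (simp only: matvec_power_smult)
  also have "\<dots> \<le> (matvec n M ^^ k) (matvec n M x) i"
    using sub Suc.prems by (intro matvec_power_mono M)
  finally show ?case by (simp only: funpow_Suc_right o_def)
qed simp

lemma resolvent_expansion:
  fixes M :: "nat \<Rightarrow> nat \<Rightarrow> 'a::field"
  assumes w: "\<And>i. i < n \<Longrightarrow> t * w i - matvec n M w i = x i" and t: "t \<noteq> 0" and "i < n"
  shows "w i = (\<Sum>k<N. (matvec n M ^^ k) x i / t ^ (k + 1)) + (matvec n M ^^ N) w i / t ^ N"
  using assms(3)
proof (induction N arbitrary: i)
  case (Suc N)
  have "(matvec n M ^^ N) w i = (matvec n M ^^ N) (\<lambda>j. 1 / t * x j + 1 / t * matvec n M w j) i"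
    using w t by (intro matvec_power_cong[OF _ Suc.prems]) (simp add: field_simps)
  also have "\<dots> = 1 / t * (matvec n M ^^ N) x i + 1 / t * (matvec n M ^^ Suc N) w i"
    by (simp only: matvec_power_lin funpow_Suc_right o_def)
  finally show ?case using Suc t by (simp add: field_simps)
qed simp

lemma resolvent_expansion_lower_bound:
  fixes M :: "nat \<Rightarrow> nat \<Rightarrow> real"
  assumes M: "\<And>i j. i < n \<Longrightarrow> j < n \<Longrightarrow> 0 \<le> M i j" and r: "0 \<le> r"
    and sub: "\<And>i. i < n \<Longrightarrow> r * x i \<le> matvec n M x i"
    and w: "\<And>i. i < n \<Longrightarrow> t * w i - matvec n M w i = x i" and t: "t > 0" and i: "i < n"
  shows "x i / t * (\<Sum>k<N. (r / t) ^ k) + (matvec n M ^^ N) w i / t ^ N \<le> w i"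
proof -
  have "x i / t * (\<Sum>k<N. (r / t) ^ k) = (\<Sum>k<N. r ^ k * x i / t ^ (k + 1))"
    by (simp add: sum_distrib_left power_divide field_simps)
  also have "\<dots> \<le> (\<Sum>k<N. (matvec n M ^^ k) x i / t ^ (k + 1))"
    using matvec_power_subinvariant[OF M r sub i] t by (intro sum_mono divide_right_mono) auto
  finally show ?thesis
    using resolvent_expansion[of n t w M x i N] w t i by simp
qed

lemma resolvent_lower_bound:
  fixes A :: "real mat"
  assumes A: "A \<in> carrier_mat n n" and n: "n > 0"
    and nonneg: "\<And>i j. i < n \<Longrightarrow> j < n \<Longrightarrow> 0 \<le> A $$ (i,j)"
    and sub: "\<And>i. i < n \<Longrightarrow> lam_max A * x i \<le> matvec n (\<lambda>i j. A $$ (i,j)) x i"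
    and t: "t > lam_max A"
    and w: "\<And>i. i < n \<Longrightarrow> t * w i - matvec n (\<lambda>i j. A $$ (i,j)) w i = x i"
    and i: "i < n"
  shows "x i / (t - lam_max A) \<le> w i"
proof -
  define r where "r = lam_max A"
  define a where "a = (\<lambda>i j. A $$ (i,j))"
  have r0: "r \<ge> 0" unfolding r_def using lam_max_nonneg[OF A n] .
  have t0: "t > 0" using t r0 unfolding r_def by simp
  define s where "s = (r + t) / 2"
  have s: "s > lam_max A" "s < t" "s \<ge> 0" using t r0 unfolding s_def r_def by auto
  obtain C where C: "\<And>k y i. i < n \<Longrightarrow> \<bar>(matvec n a ^^ k) y i\<bar> \<le> C * s ^ k * (\<Sum>j<n. \<bar>y j\<bar>)"
    using matvec_power_growth_bound[OF A n s(1)] unfolding a_def by blast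
  have "(\<lambda>N. (matvec n a ^^ N) w i / t ^ N) \<longlonglongrightarrow> 0"
  proof (rule tendsto_0_le)
    show "(\<lambda>N. (s / t) ^ N) \<longlonglongrightarrow> 0" using s t0 by (intro LIMSEQ_power_zero) simp
    show "\<forall>\<^sub>F N in sequentially.
        norm ((matvec n a ^^ N) w i / t ^ N) \<le> norm ((s / t) ^ N) * (C * (\<Sum>j<n. \<bar>w j\<bar>))"
    proof (intro always_eventually allI)
      fix N
      have "norm ((matvec n a ^^ N) w i / t ^ N) = \<bar>(matvec n a ^^ N) w i\<bar> / t ^ N"
        using t0 by (simp add: abs_divide)
      also have "\<dots> \<le> C * s ^ N * (\<Sum>j<n. \<bar>w j\<bar>) / t ^ N"
        using C[OF i] t0 by (intro divide_right_mono) auto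
      also have "\<dots> = norm ((s / t) ^ N) * (C * (\<Sum>j<n. \<bar>w j\<bar>))"
        using s(3) t0 by (simp add: power_divide abs_of_nonneg)
      finally show "norm ((matvec n a ^^ N) w i / t ^ N) \<le> norm ((s / t) ^ N) * (C * (\<Sum>j<n. \<bar>w j\<bar>))" .
    qed
  qed
  moreover have "(\<lambda>N. \<Sum>k<N. (r / t) ^ k) \<longlonglongrightarrow> 1 / (1 - r / t)"
    using geometric_sums[of "r / t"] r0 t t0 unfolding r_def sums_def by simp
  ultimately have "(\<lambda>N. x i / t * (\<Sum>k<N. (r / t) ^ k) + (matvec n a ^^ N) w i / t ^ N)
      \<longlonglongrightarrow> x i / t * (1 / (1 - r / t)) + 0"
    by (intro tendsto_add tendsto_mult tendsto_const)
  moreover have "x i / t * (1 / (1 - r / t)) + 0 = x i / (t - r)"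
    using t0 t unfolding r_def by (simp add: field_simps)
  ultimately show ?thesis
    using resolvent_expansion_lower_bound[OF _ r0 _ _ t0 i, of a x w] nonneg sub w
    unfolding r_def a_def by (auto intro: LIMSEQ_le_const2)
qed

lemma eq_zero_if_matvec_small:
  fixes N :: "nat \<Rightarrow> nat \<Rightarrow> real"
  assumes u: "\<And>i. i < n \<Longrightarrow> u i = matvec n N y i"
    and y: "\<And>j. j < n \<Longrightarrow> \<bar>y j\<bar> \<le> \<epsilon> * \<bar>u j\<bar>"
    and \<epsilon>: "0 \<le> \<epsilon>" "\<epsilon> * (\<Sum>i<n. \<Sum>j<n. \<bar>N i j\<bar>) < 1"
    and i: "i < n"
  shows "u i = 0"
proof -
  define m where "m = Max ((\<lambda>j. \<bar>u j\<bar>) ` {..<n})"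
  have um: "\<bar>u j\<bar> \<le> m" if "j < n" for j unfolding m_def using that by auto
  obtain i0 where i0: "i0 < n" "\<bar>u i0\<bar> = m"
    using Max_in[of "(\<lambda>j. \<bar>u j\<bar>) ` {..<n}"] i unfolding m_def by fastforce
  have "m = \<bar>\<Sum>j<n. N i0 j * y j\<bar>"
    using u[OF i0(1)] i0(2) unfolding matvec_def by simp
  also have "\<dots> \<le> (\<Sum>j<n. \<bar>N i0 j\<bar> * \<bar>y j\<bar>)"
    unfolding abs_mult[symmetric] by (rule sum_abs)
  also have "\<dots> \<le> (\<Sum>j<n. \<bar>N i0 j\<bar> * (\<epsilon> * m))"
  proof (intro sum_mono mult_left_mono)
    fix j assume "j \<in> {..<n}"
    then show "\<bar>y j\<bar> \<le> \<epsilon> * m"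
      using y[of j] mult_left_mono[OF um \<epsilon>(1), of j] by fastforce
  qed simp
  also have "\<dots> \<le> (\<Sum>i<n. \<Sum>j<n. \<bar>N i j\<bar>) * (\<epsilon> * m)"
    using i0(1) \<epsilon>(1) um[OF i0(1)]
    by (simp only: sum_distrib_right[symmetric])
       (intro mult_right_mono member_le_sum[where f = "\<lambda>i. \<Sum>j<n. \<bar>N i j\<bar>"], auto intro: sum_nonneg)
  finally have "m \<le> (\<epsilon> * (\<Sum>i<n. \<Sum>j<n. \<bar>N i j\<bar>)) * m" by (simp add: mult_ac)
  then have "m \<le> 0"
    using \<epsilon>(2) unfolding mult_le_cancel_right1 by auto
  then show ?thesis using um[OF i] by simp
qed

lemma shift_mat_inverse_exists:
  fixes A :: "real mat"
  assumes A: "A \<in> carrier_mat n n"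
    and not_eigenvalue: "\<not> eigenvalue (map_mat complex_of_real A) (complex_of_real t)"
  shows "\<exists>N. (\<forall>y. \<forall>i<n. matvec n N (matvec n (shift_mat t (\<lambda>i j. A $$ (i,j))) y) i = y i)
    \<and> (\<forall>y. \<forall>i<n. matvec n (shift_mat t (\<lambda>i j. A $$ (i,j))) (matvec n N y) i = y i)"
proof (rule matvec_inverse_exists, intro allI impI)
  fix y i assume y: "\<forall>i<n. matvec n (shift_mat t (\<lambda>i j. A $$ (i,j))) y i = 0" and i: "i < n"
  have "matvec n (\<lambda>i j. A $$ (i,j)) y j = t * y j" if "j < n" for j
    using y that matvec_shift_mat[OF that, of t "\<lambda>i j. A $$ (i,j)" y] by simp
  then show "y i = 0"
    using real_eigenvector_imp_eigenvalue[OF A i] not_eigenvalue by blast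
qed

lemma rescaled_resolvent:
  fixes A :: "real mat"
  assumes A: "A \<in> carrier_mat n n" and n: "n > 0"
    and nonneg: "\<And>i j. i < n \<Longrightarrow> j < n \<Longrightarrow> 0 \<le> A $$ (i,j)"
    and sub: "\<And>i. i < n \<Longrightarrow> lam_max A * x i \<le> matvec n (\<lambda>i j. A $$ (i,j)) x i"
    and \<epsilon>: "\<epsilon> > 0"
    and R: "\<forall>y. \<forall>i<n. matvec n (shift_mat (lam_max A + \<epsilon>) (\<lambda>i j. A $$ (i,j))) (matvec n R y) i = y i"
    and i: "i < n"
  shows "x i \<le> \<epsilon> * matvec n R x i"
    and "matvec n (shift_mat (lam_max A) (\<lambda>i j. A $$ (i,j))) (\<lambda>j. \<epsilon> * matvec n R x j) i
      = \<epsilon> * (x i - \<epsilon> * matvec n R x i)"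
proof -
  define w where "w = matvec n R x"
  have w: "(lam_max A + \<epsilon>) * w i - matvec n (\<lambda>i j. A $$ (i,j)) w i = x i" if "i < n" for i
    using R that matvec_shift_mat[OF that, of "lam_max A + \<epsilon>" "\<lambda>i j. A $$ (i,j)" w] unfolding w_def by simp
  show "x i \<le> \<epsilon> * matvec n R x i"
    using resolvent_lower_bound[OF A n nonneg sub _ w i] \<epsilon> unfolding w_def by (simp add: field_simps)
  have "matvec n (shift_mat (lam_max A) (\<lambda>i j. A $$ (i,j))) (\<lambda>j. \<epsilon> * w j) i
      = \<epsilon> * ((lam_max A + \<epsilon>) * w i - matvec n (\<lambda>i j. A $$ (i,j)) w i) - \<epsilon> * (\<epsilon> * w i)"
    unfolding matvec_shift_mat[OF i] matvec_smult by (simp add: algebra_simps)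
  then show "matvec n (shift_mat (lam_max A) (\<lambda>i j. A $$ (i,j))) (\<lambda>j. \<epsilon> * matvec n R x j) i
      = \<epsilon> * (x i - \<epsilon> * matvec n R x i)"
    unfolding w[OF i] unfolding w_def by (simp add: algebra_simps)
qed

(* If r = lam_max A were not an eigenvalue, rI - A would have an inverse N.  But for t slightly
   above r the vector u = (t - r)(tI - A)\<inverse> x, with x \<ge> 0 sub-invariant, satisfies x \<le> u and
   (rI - A) u = (t - r)(x - u), so u = (t - r) N (x - u) is too small to dominate x. *)
theorem lam_max_eigenvalue:
  fixes A :: "real mat"
  assumes A: "A \<in> carrier_mat n n" and n: "n > 0"
    and nonneg: "\<And>i j. i < n \<Longrightarrow> j < n \<Longrightarrow> 0 \<le> A $$ (i,j)"
  shows "eigenvalue (map_mat complex_of_real A) (complex_of_real (lam_max A))"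
proof (rule ccontr)
  assume not_eigenvalue: "\<not> ?thesis"
  obtain x i1 where x: "\<And>j. j < n \<Longrightarrow> 0 \<le> x j" "i1 < n" "x i1 \<noteq> 0"
    and sub: "\<And>i. i < n \<Longrightarrow> lam_max A * x i \<le> matvec n (\<lambda>i j. A $$ (i,j)) x i"
    using subinvariant_vector_exists[OF A n nonneg] by blast
  define S where "S = shift_mat (lam_max A) (\<lambda>i j. A $$ (i,j))"
  from shift_mat_inverse_exists[OF A not_eigenvalue]
  obtain N where N: "\<forall>y. \<forall>i<n. matvec n N (matvec n S y) i = y i"
    unfolding S_def by blast
  define \<epsilon> where "\<epsilon> = 1 / (2 * (1 + (\<Sum>i<n. \<Sum>j<n. \<bar>N i j\<bar>)))"
  have "0 \<le> (\<Sum>i<n. \<Sum>j<n. \<bar>N i j\<bar>)" by (intro sum_nonneg) auto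
  then have \<epsilon>: "0 < \<epsilon>" "\<epsilon> * (\<Sum>i<n. \<Sum>j<n. \<bar>N i j\<bar>) < 1"
    unfolding \<epsilon>_def by (auto simp: field_simps)
  have "\<not> eigenvalue (map_mat complex_of_real A) (complex_of_real (lam_max A + \<epsilon>))"
  proof
    assume "eigenvalue (map_mat complex_of_real A) (complex_of_real (lam_max A + \<epsilon>))"
    from eigenvalue_norm_le_lam_max[OF A this] have "\<bar>lam_max A + \<epsilon>\<bar> \<le> lam_max A"
      by (simp only: norm_of_real)
    with \<epsilon>(1) show False by linarith
  qed
  from shift_mat_inverse_exists[OF A this]
  obtain R where R: "\<forall>y. \<forall>i<n. matvec n (shift_mat (lam_max A + \<epsilon>) (\<lambda>i j. A $$ (i,j))) (matvec n R y) i = y i"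
    by blast
  define u where "u = (\<lambda>j. \<epsilon> * matvec n R x j)"
  have xu: "x j \<le> u j" if "j < n" for j
    unfolding u_def using rescaled_resolvent(1)[OF A n nonneg sub \<epsilon>(1) R that] by simp
  have Su: "matvec n S u j = \<epsilon> * (x j - u j)" if "j < n" for j
    unfolding S_def u_def using rescaled_resolvent(2)[OF A n nonneg sub \<epsilon>(1) R that] by simp
  have "u i = matvec n N (\<lambda>j. \<epsilon> * (x j - u j)) i" if "i < n" for i
  proof -
    have "u i = matvec n N (matvec n S u) i" using N that by simp
    also have "matvec n N (matvec n S u) = matvec n N (\<lambda>j. \<epsilon> * (x j - u j))"
      by (rule matvec_cong) (rule Su)
    finally show ?thesis .
  qed
  then have "u i1 = 0"
  proof (rule eq_zero_if_matvec_small[OF _ _ less_imp_le[OF \<epsilon>(1)] \<epsilon>(2) x(2)])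
    fix j assume j: "j < n"
    have "\<bar>x j - u j\<bar> \<le> \<bar>u j\<bar>" using x(1)[OF j] xu[OF j] by linarith
    then show "\<bar>\<epsilon> * (x j - u j)\<bar> \<le> \<epsilon> * \<bar>u j\<bar>"
      using \<epsilon>(1) by (simp add: abs_mult mult_left_mono)
  qed
  then show False using x(1)[OF x(2)] x(3) xu[OF x(2)] by linarith
qed

section \<open>The trace of the square\<close>

lemma square_sum_le_card_sum_squares:
  fixes f :: "nat \<Rightarrow> real"
  shows "(\<Sum>i<n. f i)\<^sup>2 \<le> real n * (\<Sum>i<n. (f i)\<^sup>2)"
proof -
  have "0 \<le> (\<Sum>i<n. \<Sum>j<n. (f i - f j)\<^sup>2)" by (intro sum_nonneg) auto
  also have "\<dots> = (\<Sum>i<n. \<Sum>j<n. (f i)\<^sup>2 + (f j)\<^sup>2 - 2 * f i * f j)"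
    by (simp add: power2_eq_square algebra_simps)
  also have "\<dots> = 2 * (real n * (\<Sum>i<n. (f i)\<^sup>2)) - 2 * (\<Sum>i<n. f i)\<^sup>2"
    by (simp add: sum.distrib sum_subtractf sum_distrib_left sum_distrib_right power2_eq_square mult_ac)
  finally show ?thesis by simp
qed

lemma matvec_symmetric:
  assumes "\<And>i j. i < n \<Longrightarrow> j < n \<Longrightarrow> B i j = B j i"
  shows "(\<Sum>i<n. y i * matvec n B z i) = (\<Sum>i<n. matvec n B y i * z i)"
proof -
  have "(\<Sum>i<n. y i * matvec n B z i) = (\<Sum>i<n. \<Sum>j<n. y i * B i j * z j)"
    unfolding matvec_def by (simp add: sum_distrib_left mult_ac)
  also have "\<dots> = (\<Sum>j<n. \<Sum>i<n. B j i * y i * z j)"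
    using assms by (subst sum.swap) (auto intro!: sum.cong)
  also have "\<dots> = (\<Sum>j<n. matvec n B y j * z j)"
    unfolding matvec_def by (simp add: sum_distrib_right)
  finally show ?thesis .
qed

lemma matvec_power_symmetric:
  assumes "\<And>i j. i < n \<Longrightarrow> j < n \<Longrightarrow> B i j = B j i"
  shows "(\<Sum>i<n. y i * (matvec n B ^^ k) z i) = (\<Sum>i<n. (matvec n B ^^ k) y i * z i)"
proof (induction k arbitrary: y z)
  case (Suc k)
  have "(\<Sum>i<n. y i * (matvec n B ^^ Suc k) z i) = (\<Sum>i<n. y i * (matvec n B ^^ k) (matvec n B z) i)"
    by (simp only: funpow_Suc_right o_def)
  also have "\<dots> = (\<Sum>i<n. (matvec n B ^^ k) y i * matvec n B z i)"
    by (rule Suc)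
  also have "\<dots> = (\<Sum>i<n. matvec n B ((matvec n B ^^ k) y) i * z i)"
    by (rule matvec_symmetric[OF assms])
  finally show ?case by simp
qed simp

(* For S k the entry sum of B^k, symmetry and Cauchy-Schwarz give S (2k) \<ge> (S k)^2 / n, so
   S (2^m) \<ge> n c^(2^m) with c = S 1 / n; this outgrows D s^(2^m) unless c \<le> s. *)
lemma symmetric_entry_sum_le_growth_rate:
  fixes B :: "nat \<Rightarrow> nat \<Rightarrow> real"
  assumes sym: "\<And>i j. i < n \<Longrightarrow> j < n \<Longrightarrow> B i j = B j i" and n: "n > 0" and s: "s > 0"
    and bound: "\<And>k. (\<Sum>i<n. (matvec n B ^^ k) (\<lambda>_. 1) i) \<le> D * s ^ k"
  shows "(\<Sum>i<n. \<Sum>j<n. B i j) \<le> real n * s"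
proof (rule ccontr)
  define S where "S k = (\<Sum>i<n. (matvec n B ^^ k) (\<lambda>_. 1) i)" for k
  define c where "c = (\<Sum>i<n. \<Sum>j<n. B i j) / real n"
  assume "\<not> ?thesis"
  then have c: "c > s" unfolding c_def using n by (simp add: field_simps)
  have S_double: "(S k)\<^sup>2 / real n \<le> S (k + k)" for k
  proof -
    have "S (k + k) = (\<Sum>i<n. 1 * (matvec n B ^^ k) ((matvec n B ^^ k) (\<lambda>_. 1)) i)"
      unfolding S_def by (simp add: funpow_add)
    also have "\<dots> = (\<Sum>i<n. (matvec n B ^^ k) (\<lambda>_. 1) i * (matvec n B ^^ k) (\<lambda>_. 1) i)"
      by (rule matvec_power_symmetric[OF sym])
    also have "\<dots> = (\<Sum>i<n. ((matvec n B ^^ k) (\<lambda>_. 1) i)\<^sup>2)"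
      by (simp add: power2_eq_square)
    finally show ?thesis
      using square_sum_le_card_sum_squares[of "\<lambda>i. (matvec n B ^^ k) (\<lambda>_. 1) i" n] n
      unfolding S_def by (simp add: field_simps)
  qed
  have S_pow: "real n * c ^ (2 ^ m) \<le> S (2 ^ m)" for m
  proof (induction m)
    case 0
    then show ?case unfolding S_def c_def matvec_def using n by simp
  next
    case (Suc m)
    have "real n * c ^ 2 ^ Suc m = (real n * c ^ 2 ^ m)\<^sup>2 / real n"
      using n by (simp add: power2_eq_square power_mult power_add field_simps mult_2)
    also have "\<dots> \<le> (S (2 ^ m))\<^sup>2 / real n"
      using Suc c s by (intro divide_right_mono power_mono) auto
    also have "\<dots> \<le> S (2 ^ Suc m)" using S_double[of "2 ^ m"] by (simp add: mult_2)
    finally show ?case .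
  qed
  obtain m where m: "D / real n < (c / s) ^ m"
    using real_arch_pow[of "c / s"] c s by auto
  have "(c / s) ^ m \<le> (c / s) ^ 2 ^ m"
    using c s by (intro power_increasing) (auto simp: less_imp_le[OF less_exp])
  also have "\<dots> \<le> D / real n"
    using order_trans[OF S_pow[of m] bound[of "2 ^ m", folded S_def]] n s
    by (simp add: power_divide field_simps)
  finally show False using m by simp
qed

lemma trace_square_le:
  fixes A :: "real mat"
  assumes A: "A \<in> carrier_mat n n" and n: "n > 0"
    and nonneg: "\<And>i j. i < n \<Longrightarrow> j < n \<Longrightarrow> 0 \<le> A $$ (i,j)"
    and le1: "\<And>i j. i < n \<Longrightarrow> j < n \<Longrightarrow> A $$ (i,j) \<le> 1"
  shows "(\<Sum>i<n. \<Sum>j<n. A $$ (i,j) * A $$ (j,i)) \<le> real n * lam_max A"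
proof -
  have bound: "(\<Sum>i<n. \<Sum>j<n. A $$ (i,j) * A $$ (j,i)) \<le> real n * s" if s: "s > lam_max A" for s
  proof -
    obtain C where C: "\<And>k y i. i < n \<Longrightarrow>
        \<bar>(matvec n (\<lambda>i j. A $$ (i,j)) ^^ k) y i\<bar> \<le> C * s ^ k * (\<Sum>j<n. \<bar>y j\<bar>)"
      using matvec_power_growth_bound[OF A n s] by blast
    have "(\<Sum>i<n. (matvec n (\<lambda>i j. A $$ (i,j) * A $$ (j,i)) ^^ k) (\<lambda>_. 1) i)
        \<le> (\<Sum>i<n. C * s ^ k * real n)" for k
    proof (rule sum_mono)
      fix i assume i: "i \<in> {..<n}"
      have "(matvec n (\<lambda>i j. A $$ (i,j) * A $$ (j,i)) ^^ k) (\<lambda>_. 1) i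
          \<le> (matvec n (\<lambda>i j. A $$ (i,j)) ^^ k) (\<lambda>_. 1) i"
        using nonneg le1 i by (intro matvec_power_mono_matrix) (auto simp: mult_left_le)
      also have "\<dots> \<le> C * s ^ k * real n" using C[of i k "\<lambda>_. 1"] i by simp
      finally show "(matvec n (\<lambda>i j. A $$ (i,j) * A $$ (j,i)) ^^ k) (\<lambda>_. 1) i \<le> C * s ^ k * real n" .
    qed
    then have "(\<Sum>i<n. (matvec n (\<lambda>i j. A $$ (i,j) * A $$ (j,i)) ^^ k) (\<lambda>_. 1) i)
        \<le> (real n * real n * C) * s ^ k" for k
      by (simp add: mult_ac)
    moreover have "s > 0" using s lam_max_nonneg[OF A n] by simp
    ultimately show ?thesis
      by (intro symmetric_entry_sum_le_growth_rate[OF _ n]) auto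
  qed
  have "(\<Sum>i<n. \<Sum>j<n. A $$ (i,j) * A $$ (j,i)) / real n \<le> lam_max A"
  proof (rule dense_ge)
    fix s assume "lam_max A < s"
    then show "(\<Sum>i<n. \<Sum>j<n. A $$ (i,j) * A $$ (j,i)) / real n \<le> s"
      using bound n by (simp add: divide_le_eq mult.commute)
  qed
  then show ?thesis using n by (simp add: divide_le_eq mult.commute)
qed

section \<open>Schur's inequality for distinct eigenvalues\<close>

definition cinner :: "nat \<Rightarrow> (nat \<Rightarrow> complex) \<Rightarrow> (nat \<Rightarrow> complex) \<Rightarrow> complex" where
  "cinner n x y = (\<Sum>i<n. x i * cnj (y i))"

lemma cinner_cong:
  "(\<And>i. i < n \<Longrightarrow> x i = x' i) \<Longrightarrow> (\<And>i. i < n \<Longrightarrow> y i = y' i) \<Longrightarrow> cinner n x y = cinner n x' y'"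
  unfolding cinner_def by (auto intro!: sum.cong)

lemma cinner_commute: "cinner n y x = cnj (cinner n x y)"
  unfolding cinner_def by (simp add: mult.commute)

lemma cinner_add_left: "cinner n (\<lambda>i. x i + y i) z = cinner n x z + cinner n y z"
  unfolding cinner_def by (simp add: algebra_simps sum.distrib)

lemma cinner_diff_left: "cinner n (\<lambda>i. x i - y i) z = cinner n x z - cinner n y z"
  unfolding cinner_def by (simp add: algebra_simps sum_subtractf)

lemma cinner_scale_left: "cinner n (\<lambda>i. a * x i) z = a * cinner n x z"
  unfolding cinner_def by (simp add: algebra_simps sum_distrib_left)

lemma cinner_sum_left: "cinner n (\<lambda>i. \<Sum>k<K. f k i) z = (\<Sum>k<K. cinner n (f k) z)"
  unfolding cinner_def by (simp add: sum_distrib_right sum.swap[of _ "{..<n}"])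

lemma cinner_diff_right: "cinner n z (\<lambda>i. x i - y i) = cinner n z x - cinner n z y"
  unfolding cinner_def by (simp add: algebra_simps sum_subtractf)

lemma cinner_scale_right: "cinner n z (\<lambda>i. a * x i) = cnj a * cinner n z x"
  unfolding cinner_def by (simp add: algebra_simps sum_distrib_left)

lemma cinner_sum_right: "cinner n z (\<lambda>i. \<Sum>k<K. f k i) = (\<Sum>k<K. cinner n z (f k))"
  unfolding cinner_def by (simp add: sum_distrib_left sum.swap[of _ "{..<n}"])

lemma cinner_self: "cinner n x x = complex_of_real (\<Sum>i<n. (cmod (x i))\<^sup>2)"
proof -
  have "cinner n x x = (\<Sum>i<n. complex_of_real ((cmod (x i))\<^sup>2))"
    unfolding cinner_def by (rule sum.cong) (simp_all only: complex_norm_square)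
  then show ?thesis by simp
qed

definition orthonormal :: "nat \<Rightarrow> nat \<Rightarrow> (nat \<Rightarrow> nat \<Rightarrow> complex) \<Rightarrow> bool" where
  "orthonormal n K e \<longleftrightarrow> (\<forall>k<K. \<forall>l<K. cinner n (e k) (e l) = (if k = l then 1 else 0))"

lemma bessel_inequality:
  assumes "orthonormal n K e"
  shows "(\<Sum>k<K. (cmod (cinner n x (e k)))\<^sup>2) \<le> (\<Sum>i<n. (cmod (x i))\<^sup>2)"
proof -
  define c where "c k = cinner n x (e k)" for k
  define z where "z = (\<lambda>i. x i - (\<Sum>k<K. c k * e k i))"
  have z_orth: "cinner n (e k) z = 0" if k: "k < K" for k
  proof -
    have "cinner n (e k) z = cinner n (e k) x - (\<Sum>l<K. cnj (c l) * cinner n (e k) (e l))"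
      unfolding z_def cinner_diff_right cinner_sum_right cinner_scale_right ..
    also have "(\<Sum>l<K. cnj (c l) * cinner n (e k) (e l)) = (\<Sum>l<K. if l = k then cnj (c l) else 0)"
      using assms k unfolding orthonormal_def by (intro sum.cong) auto
    also have "\<dots> = cnj (c k)" using k by simp
    finally show ?thesis unfolding c_def using cinner_commute[of n "e k" x] by simp
  qed
  have "cinner n z z = cinner n x z - (\<Sum>k<K. c k * cinner n (e k) z)"
    by (subst (1) z_def) (simp only: cinner_diff_left cinner_sum_left cinner_scale_left)
  also have "\<dots> = cinner n x x - (\<Sum>k<K. cnj (c k) * c k)"
    using z_orth unfolding z_def cinner_diff_right cinner_sum_right cinner_scale_right c_def by simp
  also have "(\<Sum>k<K. cnj (c k) * c k) = (\<Sum>k<K. complex_of_real ((cmod (c k))\<^sup>2))"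
    by (rule sum.cong) (simp_all only: complex_norm_square mult.commute)
  finally have "complex_of_real (\<Sum>i<n. (cmod (z i))\<^sup>2)
      = complex_of_real ((\<Sum>i<n. (cmod (x i))\<^sup>2) - (\<Sum>k<K. (cmod (c k))\<^sup>2))"
    unfolding cinner_self by simp
  then have "(\<Sum>i<n. (cmod (z i))\<^sup>2) = (\<Sum>i<n. (cmod (x i))\<^sup>2) - (\<Sum>k<K. (cmod (c k))\<^sup>2)"
    by (simp only: of_real_eq_iff)
  moreover have "0 \<le> (\<Sum>i<n. (cmod (z i))\<^sup>2)" by (simp add: sum_nonneg)
  ultimately show ?thesis unfolding c_def by simp
qed

lemma diagonal_sum_sq_le_frobenius:
  assumes e: "orthonormal n K e"
  shows "(\<Sum>k<K. (cmod (cinner n (matvec n M (e k)) (e k)))\<^sup>2) \<le> (\<Sum>i<n. \<Sum>j<n. (cmod (M i j))\<^sup>2)"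
proof -
  have "cinner n (\<lambda>j. cnj (e k j)) (\<lambda>j. cnj (e l j)) = cnj (cinner n (e k) (e l))" for k l
    unfolding cinner_def by simp
  then have conj_e: "orthonormal n K (\<lambda>k j. cnj (e k j))"
    using e unfolding orthonormal_def by simp
  have row: "(\<Sum>k<K. (cmod (matvec n M (e k) i))\<^sup>2) \<le> (\<Sum>j<n. (cmod (M i j))\<^sup>2)" for i
    using bessel_inequality[OF conj_e, of "M i"] unfolding matvec_def cinner_def by simp
  have unit: "orthonormal n 1 (\<lambda>_. e k)" if "k < K" for k
    using e that unfolding orthonormal_def by simp
  have "(\<Sum>k<K. (cmod (cinner n (matvec n M (e k)) (e k)))\<^sup>2) \<le> (\<Sum>k<K. \<Sum>i<n. (cmod (matvec n M (e k) i))\<^sup>2)"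
    using bessel_inequality[OF unit] by (intro sum_mono) simp
  also have "\<dots> = (\<Sum>i<n. \<Sum>k<K. (cmod (matvec n M (e k) i))\<^sup>2)" by (rule sum.swap)
  also have "\<dots> \<le> (\<Sum>i<n. \<Sum>j<n. (cmod (M i j))\<^sup>2)" by (intro sum_mono row)
  finally show ?thesis .
qed

definition in_span :: "nat \<Rightarrow> nat \<Rightarrow> (nat \<Rightarrow> nat \<Rightarrow> complex) \<Rightarrow> (nat \<Rightarrow> complex) \<Rightarrow> bool" where
  "in_span n K e v \<longleftrightarrow> (\<exists>c. \<forall>i<n. v i = (\<Sum>l<K. c l * e l i))"

definition upper_triangular_wrt ::
    "nat \<Rightarrow> (nat \<Rightarrow> nat \<Rightarrow> complex) \<Rightarrow> nat \<Rightarrow> (nat \<Rightarrow> nat \<Rightarrow> complex) \<Rightarrow> (nat \<Rightarrow> complex) \<Rightarrow> bool" where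
  "upper_triangular_wrt n M K e d \<longleftrightarrow> (\<forall>k<K. in_span n k e (\<lambda>i. matvec n M (e k) i - d k * e k i))"

lemma in_span_cong:
  assumes "in_span n K e v" and "\<And>l. l < K \<Longrightarrow> e' l = e l" and "\<And>i. i < n \<Longrightarrow> v' i = v i"
  shows "in_span n K e' v'"
  using assms unfolding in_span_def by auto

lemma in_span_mono:
  assumes "in_span n K e v" and "K \<le> K'"
  shows "in_span n K' e v"
proof -
  obtain c where c: "\<And>i. i < n \<Longrightarrow> v i = (\<Sum>l<K. c l * e l i)" using assms(1) unfolding in_span_def by blast
  have "(\<Sum>l<K'. (if l < K then c l else 0) * e l i) = (\<Sum>l<K. c l * e l i)" for i
    using assms(2) by (intro sum.mono_neutral_cong_right) auto
  then show ?thesis using c unfolding in_span_def by metis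
qed

lemma in_span_basis:
  assumes "l < K"
  shows "in_span n K e (e l)"
proof -
  have "(\<Sum>m<K. (if m = l then 1 else 0) * e m i) = (\<Sum>m<K. if m = l then e m i else 0)" for i
    by (intro sum.cong) auto
  then show ?thesis
    using assms unfolding in_span_def by (intro exI[of _ "\<lambda>m. if m = l then 1 else 0"]) simp
qed

lemma in_span_lin:
  assumes "in_span n K e v" and "in_span n K e w"
  shows "in_span n K e (\<lambda>i. a * v i + b * w i)"
proof -
  obtain c d where "\<And>i. i < n \<Longrightarrow> v i = (\<Sum>l<K. c l * e l i)" "\<And>i. i < n \<Longrightarrow> w i = (\<Sum>l<K. d l * e l i)"
    using assms unfolding in_span_def by blast
  then show ?thesis unfolding in_span_def
    by (intro exI[of _ "\<lambda>l. a * c l + b * d l"]) (simp add: sum_distrib_left sum.distrib algebra_simps)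
qed

lemma in_span_scale: "in_span n K e v \<Longrightarrow> in_span n K e (\<lambda>i. a * v i)"
  using in_span_lin[of n K e v v a 0] by simp

lemma in_span_sum:
  fixes f :: "nat \<Rightarrow> nat \<Rightarrow> complex"
  assumes "\<And>m. m < L \<Longrightarrow> in_span n K e (f m)"
  shows "in_span n K e (\<lambda>i. \<Sum>m<L. f m i)"
  using assms
proof (induction L)
  case 0
  then show ?case unfolding in_span_def by (intro exI[of _ "\<lambda>_. 0"]) simp
next
  case (Suc L)
  then show ?case using in_span_lin[of n K e "\<lambda>i. \<Sum>m<L. f m i" "f L" 1 1] by simp
qed

lemma upper_triangular_wrt_mono:
  "upper_triangular_wrt n M K e d \<Longrightarrow> K' \<le> K \<Longrightarrow> upper_triangular_wrt n M K' e d"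
  unfolding upper_triangular_wrt_def by auto

lemma matvec_sum:
  "matvec n M (\<lambda>j. \<Sum>l<L. c l * f l j) i = (\<Sum>l<L. c l * matvec n M (f l) i)"
  unfolding matvec_def by (simp add: sum_distrib_left sum.swap[of _ "{..<n}"] mult_ac)

lemma in_span_matvec_basis:
  assumes "upper_triangular_wrt n M K e d" and "l < K"
  shows "in_span n K e (matvec n M (e l))"
proof -
  have "in_span n K e (\<lambda>i. matvec n M (e l) i - d l * e l i)"
    using assms in_span_mono[of n l e] unfolding upper_triangular_wrt_def by auto
  from in_span_lin[OF this in_span_basis[OF assms(2)], of 1 "d l"] show ?thesis by simp
qed

lemma in_span_shift_last:
  assumes M: "upper_triangular_wrt n M (Suc K) e d" and v: "in_span n (Suc K) e v"
  shows "in_span n K e (\<lambda>i. matvec n M v i - d K * v i)"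
proof -
  obtain c where c: "\<And>i. i < n \<Longrightarrow> v i = (\<Sum>l<Suc K. c l * e l i)"
    using v unfolding in_span_def by blast
  define g where "g l i = matvec n M (e l) i - d K * e l i" for l i
  have eq: "matvec n M v i - d K * v i = (\<Sum>l<Suc K. c l * g l i)" if "i < n" for i
    using c[OF that] matvec_sum[where L = "Suc K" and c = c and f = e] matvec_cong[of n v, OF c]
    unfolding g_def by (simp add: algebra_simps sum_subtractf sum_distrib_left)
  have "in_span n K e (g l)" if "l < Suc K" for l
  proof (cases "l = K")
    case True
    then show ?thesis using M unfolding upper_triangular_wrt_def g_def by simp
  next
    case False
    with that have l: "l < K" by simp
    have "in_span n K e (\<lambda>i. matvec n M (e l) i - d l * e l i)"
      using M l in_span_mono[of n l e] unfolding upper_triangular_wrt_def by auto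
    from in_span_lin[OF this in_span_basis[OF l], of 1 "d l - d K"]
    show ?thesis unfolding g_def by (simp add: algebra_simps)
  qed
  then have "in_span n K e (\<lambda>i. \<Sum>l<Suc K. c l * g l i)"
    by (intro in_span_sum in_span_scale)
  then show ?thesis by (rule in_span_cong) (use eq in auto)
qed

lemma matvec_diff: "matvec n M (\<lambda>j. f j - g j) i = matvec n M f i - matvec n M g i"
  unfolding matvec_def by (simp add: right_diff_distrib sum_subtractf)

lemma eigenvector_in_span_eq_0:
  assumes "upper_triangular_wrt n M K e d" and "\<And>k. k < K \<Longrightarrow> d k \<noteq> \<nu>"
    and "\<And>i. i < n \<Longrightarrow> matvec n M v i = \<nu> * v i" and "in_span n K e v" and "i < n"
  shows "v i = 0"
  using assms
proof (induction K arbitrary: v i)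
  case 0
  then show ?case unfolding in_span_def by simp
next
  case (Suc K)
  define w where "w = (\<lambda>i. matvec n M v i - d K * v i)"
  have w: "w i = (\<nu> - d K) * v i" if "i < n" for i
    using Suc.prems(3)[OF that] unfolding w_def by (simp add: algebra_simps)
  have "w i = 0"
  proof (rule Suc.IH)
    show "upper_triangular_wrt n M K e d"
      using Suc.prems(1) by (rule upper_triangular_wrt_mono) simp
    show "in_span n K e w"
      unfolding w_def using in_span_shift_last[OF Suc.prems(1,4)] .
    fix j assume j: "j < n"
    have "matvec n M w = matvec n M (\<lambda>i. (\<nu> - d K) * v i)" by (rule matvec_cong) (rule w)
    then show "matvec n M w j = \<nu> * w j"
      using Suc.prems(3)[OF j] w[OF j] by (simp add: matvec_smult)
  qed (use Suc.prems in auto)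
  then show ?case using w[OF Suc.prems(5)] Suc.prems(2)[of K] by simp
qed

lemma normalization_exists:
  assumes "\<exists>i<n. z i \<noteq> 0"
  obtains q :: real where "q > 0"
    and "cinner n (\<lambda>i. complex_of_real (1 / q) * z i) (\<lambda>i. complex_of_real (1 / q) * z i) = 1"
proof -
  define q where "q = sqrt (\<Sum>i<n. (cmod (z i))\<^sup>2)"
  obtain i where "i < n" "z i \<noteq> 0" using assms by blast
  then have "(\<Sum>i<n. (cmod (z i))\<^sup>2) > 0"
    by (intro sum_pos2[of "{..<n}" i]) auto
  then have q: "q > 0" unfolding q_def by simp
  have "cinner n (\<lambda>i. complex_of_real (1 / q) * z i) (\<lambda>i. complex_of_real (1 / q) * z i)
      = complex_of_real (1 / q\<^sup>2 * (\<Sum>i<n. (cmod (z i))\<^sup>2))"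
    unfolding cinner_scale_left cinner_scale_right cinner_self by (simp add: power2_eq_square)
  also have "\<dots> = 1" using q unfolding q_def by (simp add: sum_nonneg)
  finally show ?thesis using q that by blast
qed

lemma eigenvector_residual_in_span:
  assumes M: "upper_triangular_wrt n M K e d" and v: "\<And>i. i < n \<Longrightarrow> matvec n M v i = \<nu> * v i"
  shows "in_span n K e (\<lambda>i. matvec n M (\<lambda>j. v j - (\<Sum>l<K. c l * e l j)) i
    - \<nu> * (v i - (\<Sum>l<K. c l * e l i)))"
proof -
  define g where "g l i = matvec n M (e l) i - \<nu> * e l i" for l i
  have "in_span n K e (g l)" if "l < K" for l
    using in_span_lin[OF in_span_matvec_basis[OF M that] in_span_basis[OF that], of 1 "- \<nu>"]
    unfolding g_def by simp
  then have span: "in_span n K e (\<lambda>i. \<Sum>l<K. (- c l) * g l i)"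
    by (intro in_span_sum in_span_scale)
  have eq: "matvec n M (\<lambda>j. v j - (\<Sum>l<K. c l * e l j)) i - \<nu> * (v i - (\<Sum>l<K. c l * e l i))
      = (\<Sum>l<K. (- c l) * g l i)" if "i < n" for i
    using v[OF that] unfolding matvec_diff matvec_sum g_def
    by (simp add: algebra_simps sum_subtractf sum_distrib_left)
  from span show ?thesis by (rule in_span_cong) (use eq in auto)
qed

lemma gram_schmidt_step:
  assumes e: "orthonormal n K e" and M: "upper_triangular_wrt n M K e d"
    and v: "\<And>i. i < n \<Longrightarrow> matvec n M v i = d K * v i" and v_new: "\<not> in_span n K e v"
  obtains u where "orthonormal n (Suc K) (e(K := u))"
    and "upper_triangular_wrt n M (Suc K) (e(K := u)) d"
proof -
  define c where "c l = cinner n v (e l)" for l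
  define z where "z = (\<lambda>i. v i - (\<Sum>l<K. c l * e l i))"
  have z_orth: "cinner n z (e k) = 0" if k: "k < K" for k
  proof -
    have "cinner n z (e k) = c k - (\<Sum>l<K. c l * cinner n (e l) (e k))"
      unfolding z_def c_def by (simp only: cinner_diff_left cinner_sum_left cinner_scale_left)
    also have "(\<Sum>l<K. c l * cinner n (e l) (e k)) = (\<Sum>l<K. if l = k then c l else 0)"
      using e k unfolding orthonormal_def by (intro sum.cong) auto
    finally show ?thesis using k by simp
  qed
  have "\<exists>i<n. z i \<noteq> 0"
  proof (rule ccontr)
    assume "\<not> (\<exists>i<n. z i \<noteq> 0)"
    then have "in_span n K e v" unfolding in_span_def z_def by (intro exI[of _ c]) auto
    with v_new show False ..
  qed
  then obtain q :: real where q: "q > 0"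
    and u_unit: "cinner n (\<lambda>i. complex_of_real (1 / q) * z i) (\<lambda>i. complex_of_real (1 / q) * z i) = 1"
    by (rule normalization_exists)
  define u where "u = (\<lambda>i. complex_of_real (1 / q) * z i)"
  have u_orth: "cinner n u (e k) = 0" "cinner n (e k) u = 0" if "k < K" for k
    using z_orth[OF that] cinner_commute[of n "e k" u]
    unfolding u_def cinner_scale_left by simp_all
  have orth: "orthonormal n (Suc K) (e(K := u))"
    using e u_unit u_orth unfolding orthonormal_def u_def by (auto simp: less_Suc_eq)
  have "in_span n K e (\<lambda>i. complex_of_real (1 / q) * (matvec n M z i - d K * z i))"
    unfolding z_def using eigenvector_residual_in_span[OF M v, of c] by (rule in_span_scale)
  moreover have "matvec n M u i - d K * u i = complex_of_real (1 / q) * (matvec n M z i - d K * z i)" for i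
    unfolding u_def matvec_smult by (simp add: algebra_simps)
  ultimately have "in_span n K e (\<lambda>i. matvec n M u i - d K * u i)"
    by (auto elim!: in_span_cong)
  then have "upper_triangular_wrt n M (Suc K) (e(K := u)) d"
    using M unfolding upper_triangular_wrt_def
    by (auto simp: less_Suc_eq elim!: in_span_cong)
  with orth show ?thesis using that by blast
qed

lemma orthonormal_triangular_basis_exists:
  assumes "\<And>k l. k < K \<Longrightarrow> l < K \<Longrightarrow> d k = d l \<Longrightarrow> k = l"
    and "\<And>k. k < K \<Longrightarrow> \<exists>i<n. v k i \<noteq> 0"
    and "\<And>k i. k < K \<Longrightarrow> i < n \<Longrightarrow> matvec n M (v k) i = d k * v k i"
  shows "\<exists>e. orthonormal n K e \<and> upper_triangular_wrt n M K e d"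
  using assms
proof (induction K)
  case 0
  then show ?case unfolding orthonormal_def upper_triangular_wrt_def by simp
next
  case (Suc K)
  then obtain e where e: "orthonormal n K e" "upper_triangular_wrt n M K e d"
    by (metis less_SucI)
  have "\<not> in_span n K e (v K)"
  proof
    assume "in_span n K e (v K)"
    then have "v K i = 0" if "i < n" for i
      using eigenvector_in_span_eq_0[OF e(2) _ _ _ that, of "d K" "v K"] Suc.prems(1,3)
      by (metis less_SucI less_Suc_eq less_irrefl)
    then show False using Suc.prems(2)[of K] by auto
  qed
  then obtain u where "orthonormal n (Suc K) (e(K := u))" "upper_triangular_wrt n M (Suc K) (e(K := u)) d"
    using gram_schmidt_step[OF e, of "v K"] Suc.prems(3) by blast
  then show ?case by blast
qed

lemma cinner_matvec_triangular_diag: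
  assumes e: "orthonormal n K e" and M: "upper_triangular_wrt n M K e d" and k: "k < K"
  shows "cinner n (matvec n M (e k)) (e k) = d k"
proof -
  obtain c where c: "\<And>i. i < n \<Longrightarrow> matvec n M (e k) i - d k * e k i = (\<Sum>l<k. c l * e l i)"
    using M k unfolding upper_triangular_wrt_def in_span_def by blast
  have "cinner n (matvec n M (e k)) (e k) = cinner n (\<lambda>i. d k * e k i + (\<Sum>l<k. c l * e l i)) (e k)"
    by (rule cinner_cong) (use c in \<open>auto simp: algebra_simps\<close>)
  also have "\<dots> = d k * cinner n (e k) (e k) + (\<Sum>l<k. c l * cinner n (e l) (e k))"
    by (simp only: cinner_add_left cinner_scale_left cinner_sum_left)
  also have "\<dots> = d k"
    using e k unfolding orthonormal_def by simp
  finally show ?thesis .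
qed

lemma cinner_hermitian_part:
  "cinner n (matvec n (\<lambda>i j. (M i j + cnj (M j i)) / 2) u) u
     = complex_of_real (Re (cinner n (matvec n M u) u))"
proof -
  define X where "X = cinner n (matvec n M u) u"
  have X: "X = (\<Sum>i<n. \<Sum>j<n. M i j * u j * cnj (u i))"
    unfolding X_def cinner_def matvec_def by (simp add: sum_distrib_right)
  have "cnj X = (\<Sum>i<n. \<Sum>j<n. cnj (M i j) * cnj (u j) * u i)"
    unfolding X by simp
  also have "\<dots> = (\<Sum>j<n. \<Sum>i<n. cnj (M i j) * cnj (u j) * u i)"
    by (rule sum.swap)
  also have "\<dots> = (\<Sum>i<n. \<Sum>j<n. cnj (M j i) * u j * cnj (u i))"
    by (simp add: mult_ac)
  finally have Y: "(\<Sum>i<n. \<Sum>j<n. cnj (M j i) * u j * cnj (u i)) = cnj X"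
    by (rule sym)
  have "cinner n (matvec n (\<lambda>i j. (M i j + cnj (M j i)) / 2) u) u
      = (\<Sum>i<n. \<Sum>j<n. (M i j * u j * cnj (u i) + cnj (M j i) * u j * cnj (u i)) / 2)"
    unfolding cinner_def matvec_def
    by (simp add: sum_distrib_right sum_distrib_left algebra_simps add_divide_distrib)
  also have "\<dots> = (X + cnj X) / 2"
    unfolding Y[symmetric] unfolding X by (simp add: sum.distrib sum_divide_distrib[symmetric])
  also have "\<dots> = complex_of_real (Re X)" by (simp add: complex_add_cnj)
  finally show ?thesis unfolding X_def .
qed

theorem schur_inequality_distinct_eigenvalues:
  fixes M :: "complex mat"
  assumes M: "M \<in> carrier_mat n n" and S: "finite S" "\<And>\<nu>. \<nu> \<in> S \<Longrightarrow> eigenvalue M \<nu>"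
  shows "(\<Sum>\<nu>\<in>S. (cmod \<nu>)\<^sup>2) \<le> (\<Sum>i<n. \<Sum>j<n. (cmod (M $$ (i,j)))\<^sup>2)"
    and "(\<Sum>\<nu>\<in>S. (Re \<nu>)\<^sup>2) \<le> (\<Sum>i<n. \<Sum>j<n. (cmod ((M $$ (i,j) + cnj (M $$ (j,i))) / 2))\<^sup>2)"
proof -
  define m where "m i j = M $$ (i,j)" for i j
  define K where "K = card S"
  obtain d where d: "bij_betw d {..<K} S"
    using ex_bij_betw_nat_finite[OF S(1)] unfolding K_def atLeast0LessThan by blast
  have "\<forall>k<K. \<exists>v. (\<exists>i<n. v i \<noteq> 0) \<and> (\<forall>i<n. matvec n m v i = d k * v i)"
    using d S(2) eigenvalue_iff_matvec[OF M] unfolding m_def bij_betw_def by auto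
  then obtain v where v: "\<And>k. k < K \<Longrightarrow> \<exists>i<n. v k i \<noteq> 0"
    "\<And>k i. k < K \<Longrightarrow> i < n \<Longrightarrow> matvec n m (v k) i = d k * v k i"
    by metis
  obtain e where e: "orthonormal n K e" "upper_triangular_wrt n m K e d"
    using orthonormal_triangular_basis_exists[of K d n v m] v d
    unfolding bij_betw_def inj_on_def by auto
  have reindex: "(\<Sum>\<nu>\<in>S. f \<nu>) = (\<Sum>k<K. f (d k))" for f :: "complex \<Rightarrow> real"
    by (rule sum.reindex_bij_betw[OF d, symmetric])
  have "(\<Sum>k<K. (cmod (cinner n (matvec n m (e k)) (e k)))\<^sup>2) = (\<Sum>k<K. (cmod (d k))\<^sup>2)"
    using cinner_matvec_triangular_diag[OF e] by (intro sum.cong) auto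
  then show "(\<Sum>\<nu>\<in>S. (cmod \<nu>)\<^sup>2) \<le> (\<Sum>i<n. \<Sum>j<n. (cmod (M $$ (i,j)))\<^sup>2)"
    using diagonal_sum_sq_le_frobenius[OF e(1), of m] unfolding reindex m_def by simp
  have "(\<Sum>k<K. (cmod (cinner n (matvec n (\<lambda>i j. (m i j + cnj (m j i)) / 2) (e k)) (e k)))\<^sup>2)
      = (\<Sum>k<K. (Re (d k))\<^sup>2)"
    using cinner_matvec_triangular_diag[OF e] by (intro sum.cong) (auto simp: cinner_hermitian_part)
  then show "(\<Sum>\<nu>\<in>S. (Re \<nu>)\<^sup>2) \<le> (\<Sum>i<n. \<Sum>j<n. (cmod ((M $$ (i,j) + cnj (M $$ (j,i))) / 2))\<^sup>2)"
    using diagonal_sum_sq_le_frobenius[OF e(1), of "\<lambda>i j. (m i j + cnj (m j i)) / 2"]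
    unfolding reindex m_def by simp
qed

lemma gamma_val_eq:
  "gamma_val n A = real n * lam_max A + real n ^ 2 - 2 * (\<Sum>i<n. \<Sum>j<n. (A $$ (i,j))\<^sup>2)"
proof -
  have "(\<Sum>i<n. \<Sum>j<n. 1 + min (A $$ (i,j)) (A $$ (j,i)) - (A $$ (i,j))\<^sup>2 - (A $$ (j,i))\<^sup>2)
      = real n ^ 2 + (\<Sum>i<n. \<Sum>j<n. min (A $$ (i,j)) (A $$ (j,i)))
        - (\<Sum>i<n. \<Sum>j<n. (A $$ (i,j))\<^sup>2) - (\<Sum>i<n. \<Sum>j<n. (A $$ (j,i))\<^sup>2)"
    by (simp add: sum.distrib sum_subtractf power2_eq_square)
  also have "(\<Sum>i<n. \<Sum>j<n. (A $$ (j,i))\<^sup>2) = (\<Sum>i<n. \<Sum>j<n. (A $$ (i,j))\<^sup>2)"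
    by (rule sum.swap)
  finally show ?thesis unfolding gamma_val_def by simp
qed

lemma sq_add_sq_le_one_add_mult:
  fixes a b :: real
  assumes "0 \<le> a" "a \<le> 1" "0 \<le> b" "b \<le> 1"
  shows "a\<^sup>2 + b\<^sup>2 \<le> 1 + a * b"
proof -
  have "0 \<le> (1 - a\<^sup>2) * (1 - b\<^sup>2)"
    using assms by (intro mult_nonneg_nonneg) (auto simp: power_le_one)
  moreover have "0 \<le> a * b * (1 - a * b)"
    using assms by (intro mult_nonneg_nonneg) (auto simp: mult_le_one)
  ultimately show ?thesis by (simp add: algebra_simps power2_eq_square)
qed

lemma sum_sq_le_card_sq_add_trace:
  fixes a :: "nat \<Rightarrow> nat \<Rightarrow> real"
  assumes "\<And>i j. i < n \<Longrightarrow> j < n \<Longrightarrow> 0 \<le> a i j" and "\<And>i j. i < n \<Longrightarrow> j < n \<Longrightarrow> a i j \<le> 1"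
  shows "2 * (\<Sum>i<n. \<Sum>j<n. (a i j)\<^sup>2) \<le> real n ^ 2 + (\<Sum>i<n. \<Sum>j<n. a i j * a j i)"
proof -
  have "2 * (\<Sum>i<n. \<Sum>j<n. (a i j)\<^sup>2) = (\<Sum>i<n. \<Sum>j<n. (a i j)\<^sup>2 + (a j i)\<^sup>2)"
    by (simp add: sum.distrib sum.swap[of "\<lambda>i j. (a j i)\<^sup>2"])
  also have "\<dots> \<le> (\<Sum>i<n. \<Sum>j<n. 1 + a i j * a j i)"
    using assms by (intro sum_mono sq_add_sq_le_one_add_mult) auto
  also have "\<dots> = real n ^ 2 + (\<Sum>i<n. \<Sum>j<n. a i j * a j i)"
    by (simp add: sum.distrib power2_eq_square)
  finally show ?thesis .
qed

lemma sum_sq_symmetric_part: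
  fixes a :: "nat \<Rightarrow> nat \<Rightarrow> real"
  shows "(\<Sum>i<n. \<Sum>j<n. ((a i j + a j i) / 2)\<^sup>2)
    = ((\<Sum>i<n. \<Sum>j<n. (a i j)\<^sup>2) + (\<Sum>i<n. \<Sum>j<n. a i j * a j i)) / 2"
proof -
  have sq: "((x + y) / 2)\<^sup>2 = (x\<^sup>2 + y\<^sup>2 + 2 * (x * y)) / 4" for x y :: real
    by (simp add: power2_eq_square field_simps)
  have "(\<Sum>i<n. \<Sum>j<n. ((a i j + a j i) / 2)\<^sup>2)
      = ((\<Sum>i<n. \<Sum>j<n. (a i j)\<^sup>2) + (\<Sum>i<n. \<Sum>j<n. (a j i)\<^sup>2) + 2 * (\<Sum>i<n. \<Sum>j<n. a i j * a j i)) / 4"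
    by (simp only: sq sum_divide_distrib[symmetric] sum.distrib sum_distrib_left[symmetric])
  also have "(\<Sum>i<n. \<Sum>j<n. (a j i)\<^sup>2) = (\<Sum>i<n. \<Sum>j<n. (a i j)\<^sup>2)"
    by (rule sum.swap)
  finally show ?thesis by simp
qed

lemma non_real_eigenvalue_bounds:
  fixes A :: "real mat"
  assumes A: "A \<in> carrier_mat n n" and n: "n > 0"
    and nonneg: "\<And>i j. i < n \<Longrightarrow> j < n \<Longrightarrow> 0 \<le> A $$ (i,j)"
    and \<mu>: "eigenvalue (map_mat complex_of_real A) \<mu>" and non_real: "Im \<mu> \<noteq> 0"
  shows "(lam_max A)\<^sup>2 + 2 * (cmod \<mu>)\<^sup>2 \<le> (\<Sum>i<n. \<Sum>j<n. (A $$ (i,j))\<^sup>2)"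
    and "(lam_max A)\<^sup>2 + 2 * (Re \<mu>)\<^sup>2
      \<le> ((\<Sum>i<n. \<Sum>j<n. (A $$ (i,j))\<^sup>2) + (\<Sum>i<n. \<Sum>j<n. A $$ (i,j) * A $$ (j,i))) / 2"
proof -
  let ?Ac = "map_mat complex_of_real A"
  define S where "S = {complex_of_real (lam_max A), \<mu>, cnj \<mu>}"
  have Ac: "?Ac \<in> carrier_mat n n" using A by simp
  have fin: "finite S" unfolding S_def by simp
  have eigenvalues: "eigenvalue ?Ac \<nu>" if "\<nu> \<in> S" for \<nu>
    using that lam_max_eigenvalue[OF A n nonneg] \<mu> eigenvalue_of_real_mat_cnj[OF A \<mu>]
    unfolding S_def by auto
  have distinct: "complex_of_real (lam_max A) \<noteq> \<mu>" "complex_of_real (lam_max A) \<noteq> cnj \<mu>" "\<mu> \<noteq> cnj \<mu>"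
    using non_real by (auto simp: complex_eq_iff)
  have "(\<Sum>\<nu>\<in>S. (cmod \<nu>)\<^sup>2) = (lam_max A)\<^sup>2 + 2 * (cmod \<mu>)\<^sup>2"
    unfolding S_def using distinct by simp
  moreover have "(\<Sum>i<n. \<Sum>j<n. (cmod (?Ac $$ (i,j)))\<^sup>2) = (\<Sum>i<n. \<Sum>j<n. (A $$ (i,j))\<^sup>2)"
    using A by (auto intro!: sum.cong)
  ultimately show "(lam_max A)\<^sup>2 + 2 * (cmod \<mu>)\<^sup>2 \<le> (\<Sum>i<n. \<Sum>j<n. (A $$ (i,j))\<^sup>2)"
    using schur_inequality_distinct_eigenvalues(1)[OF Ac fin eigenvalues] by simp
  have "(\<Sum>\<nu>\<in>S. (Re \<nu>)\<^sup>2) = (lam_max A)\<^sup>2 + 2 * (Re \<mu>)\<^sup>2"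
    unfolding S_def using distinct by simp
  moreover have "(\<Sum>i<n. \<Sum>j<n. (cmod ((?Ac $$ (i,j) + cnj (?Ac $$ (j,i))) / 2))\<^sup>2)
      = (\<Sum>i<n. \<Sum>j<n. ((A $$ (i,j) + A $$ (j,i)) / 2)\<^sup>2)"
    using A by (auto intro!: sum.cong simp: norm_divide power_divide simp flip: of_real_add)
  ultimately show "(lam_max A)\<^sup>2 + 2 * (Re \<mu>)\<^sup>2
      \<le> ((\<Sum>i<n. \<Sum>j<n. (A $$ (i,j))\<^sup>2) + (\<Sum>i<n. \<Sum>j<n. A $$ (i,j) * A $$ (j,i))) / 2"
    using schur_inequality_distinct_eigenvalues(2)[OF Ac fin eigenvalues]
      sum_sq_symmetric_part[of "\<lambda>i j. A $$ (i,j)" n] by simp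
qed

theorem lemma3:
  fixes A :: "real mat" and n :: nat
  assumes "A \<in> carrier_mat n n" and "n > 0"
    and "\<And>i j. i < n \<Longrightarrow> j < n \<Longrightarrow> 0 \<le> A $$ (i,j)"
    and "\<And>i j. i < n \<Longrightarrow> j < n \<Longrightarrow> A $$ (i,j) \<le> 1"
  shows "gamma_val n A \<ge> 0 \<and>
    (\<forall>\<mu>. eigenvalue (map_mat complex_of_real A) \<mu> \<and> Im \<mu> \<noteq> 0 \<longrightarrow>
       (cmod \<mu>)^2 \<le> min ((real n ^ 2 + real n * lam_max A - 2 * (lam_max A)^2 - gamma_val n A) / 4)
                          ((lam_max A)^2)
     \<and> (Re \<mu>)^2 \<le> min ((real n ^ 2 + 3 * real n * lam_max A - 4 * (lam_max A)^2 - gamma_val n A) / 8)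
                          ((lam_max A)^2))"
proof -
  note A = assms(1) and n = assms(2) and nonneg = assms(3) and le1 = assms(4)
  define r where "r = lam_max A"
  define F where "F = (\<Sum>i<n. \<Sum>j<n. (A $$ (i,j))\<^sup>2)"
  define T where "T = (\<Sum>i<n. \<Sum>j<n. A $$ (i,j) * A $$ (j,i))"
  have gamma: "gamma_val n A = real n * r + real n ^ 2 - 2 * F"
    unfolding r_def F_def by (rule gamma_val_eq)
  have F: "2 * F \<le> real n ^ 2 + T"
    unfolding F_def T_def using nonneg le1 by (rule sum_sq_le_card_sq_add_trace)
  have T: "T \<le> r * real n"
    unfolding T_def r_def using trace_square_le[OF A n nonneg le1] by (simp add: mult.commute)
  have "(cmod \<mu>)\<^sup>2 \<le> min ((real n ^ 2 + real n * r - 2 * r\<^sup>2 - gamma_val n A) / 4) (r\<^sup>2)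
      \<and> (Re \<mu>)\<^sup>2 \<le> min ((real n ^ 2 + 3 * real n * r - 4 * r\<^sup>2 - gamma_val n A) / 8) (r\<^sup>2)"
    if \<mu>: "eigenvalue (map_mat complex_of_real A) \<mu>" and non_real: "Im \<mu> \<noteq> 0" for \<mu>
  proof -
    have "cmod \<mu> \<le> r" unfolding r_def by (rule eigenvalue_norm_le_lam_max[OF A \<mu>])
    then have "(cmod \<mu>)\<^sup>2 \<le> r\<^sup>2" by (simp add: power_mono)
    moreover have "(Re \<mu>)\<^sup>2 \<le> (cmod \<mu>)\<^sup>2"
      using abs_Re_le_cmod[of \<mu>] by (metis abs_ge_zero power2_abs power_mono)
    moreover note non_real_eigenvalue_bounds[OF A n nonneg \<mu> non_real, folded r_def F_def T_def]
    ultimately show ?thesis using T unfolding gamma by simp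
  qed
  moreover have "gamma_val n A \<ge> 0" unfolding gamma using F T by (simp add: mult.commute)
  ultimately show ?thesis unfolding r_def by blast
qed

end
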